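(* Let $r\in(-\infty,0)\cup(0,1)$, let $n\ge 2$, and let $Y$ be a positive semidefinite $n\times n$ matrix of rank one. Then the map $X\mapsto X^rYX^r$ from $\mathcal{P}_n$ to the $n\times n$ positive semidefinite matrices is not operator convex, i.e. there exist $X_1,X_2\in\mathcal{P}_n$ and $\lambda\in[0,1]$ such that $(\lambda X_1+(1-\lambda)X_2)^rY(\lambda X_1+(1-\lambda)X_2)^r\le \lambda X_1^rYX_1^r+(1-\lambda)X_2^rYX_2^r$ fails in the Loewner order.
   Context: $\mathcal{P}_n$ denotes the set of $n\times n$ positive definite complex matrices. *)

theory Defs
  imports "HOL-Analysis.Analysis"
begin

text \<open>Complex n x n matrices are modelled as complex^'n^'n, the dimension n = CARD('n).\<close>

definition cadjoint :: "complex^'n^'m \<Rightarrow> complex^'m^'n" where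
  "cadjoint A = (\<chi> i j. cnj (A $ j $ i))"

definition hermitian :: "complex^'n^'n \<Rightarrow> bool" where
  "hermitian A \<longleftrightarrow> cadjoint A = A"

definition qform :: "complex^'n^'n \<Rightarrow> complex^'n \<Rightarrow> complex" where
  "qform A x = (\<Sum>i\<in>UNIV. cnj (x $ i) * (A *v x) $ i)"

definition psd :: "complex^'n^'n \<Rightarrow> bool" where
  "psd A \<longleftrightarrow> hermitian A \<and> (\<forall>x. qform A x \<in> \<real> \<and> 0 \<le> Re (qform A x))"

definition posdef :: "complex^'n^'n \<Rightarrow> bool" where
  "posdef A \<longleftrightarrow> hermitian A \<and> (\<forall>x. x \<noteq> 0 \<longrightarrow> qform A x \<in> \<real> \<and> 0 < Re (qform A x))"

definition loewner_le :: "complex^'n^'n \<Rightarrow> complex^'n^'n \<Rightarrow> bool" where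
  "loewner_le A B \<longleftrightarrow> psd (B - A)"

definition unitary :: "complex^'n^'n \<Rightarrow> bool" where
  "unitary U \<longleftrightarrow> U ** cadjoint U = mat 1 \<and> cadjoint U ** U = mat 1"

text \<open>Real power of a positive definite matrix via its spectral decomposition
  X = U D U^*, X^r = U D^r U^* (independent of the chosen decomposition).\<close>
definition mat_rpow :: "complex^'n^'n \<Rightarrow> real \<Rightarrow> complex^'n^'n" where
  "mat_rpow X r = (SOME Z. \<exists>U (d :: 'n \<Rightarrow> real). unitary U \<and> (\<forall>i. 0 < d i) \<and>
      X = U ** (\<chi> i j. if i = j then complex_of_real (d i) else 0) ** cadjoint U \<and>
      Z = U ** (\<chi> i j. if i = j then complex_of_real (d i powr r) else 0) ** cadjoint U)"

end

theory Submission
  imports Defs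
begin

text \<open>
  Take X1 = U diag(d1) U* and X2 = U diag(d2) U* for a fixed
  unitary U.  All real powers along the segment between them are diagonal in the
  same basis, so the convexity defect
    t X1^r Y X1^r + (1-t) X2^r Y X2^r - (t X1 + (1-t) X2)^r Y (t X1 + (1-t) X2)^r
  equals U (Y' o K) U*: the entrywise product of Y' = U* Y U with the real kernel
    K i j = t d1_i^r d1_j^r + (1-t) d2_i^r d2_j^r - m_i^r m_j^r,   m = t d1 + (1-t) d2.
  For t = 1/2, d1 = (1,...,1) and d2 = (1,..,3,..,1) (the 3 in position q) we get
  K p p = 0 and K p q = (1 + 3^r)/2 - 2^r, which is nonzero since x^r is strictly
  convex (r < 0) or strictly concave (0 < r < 1).  A positive semidefinite matrix
  with a zero diagonal entry has a zero row, so the defect is not positive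
  semidefinite once Y'_pq is nonzero for some p ~= q.  Such a U exists for every
  non-scalar Y (if Y is diagonal, a rotation in the (p,q)-plane does it), and a
  rank-one matrix in dimension at least 2 is not scalar.
\<close>

section \<open>Strict convexity of the power function at a midpoint\<close>

text \<open>The tangent line of x^r at 1 lies strictly above the graph for 0 < r < 1
  and strictly below it for r < 0; multiplying by r unifies both cases.\<close>
lemma powr_tangent_strict:
  fixes r x :: real
  assumes x: "0 < x" "x \<noteq> 1" and r: "r \<noteq> 0" "r < 1"
  shows "r * (1 + r * (x - 1) - x powr r) > 0"
proof -
  define h where "h = (\<lambda>y::real. 1 + r * (y - 1) - y powr r)"
  have der: "DERIV h y :> r - r * y powr (r - 1)" if "0 < y" for y
    unfolding h_def using that by (auto intro!: derivative_eq_intros)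
  have h1: "h 1 = 0" by (simp add: h_def)
  have r2: "r^2 > 0" using r by simp
  show ?thesis
  proof (cases "x > 1")
    case True
    obtain z where z: "1 < z" "z < x" "h x - h 1 = (x - 1) * (r - r * z powr (r - 1))"
      using MVT2[OF True, of h "\<lambda>y. r - r * y powr (r - 1)"] der by force
    define a where "a = z powr (r - 1)"
    have "a < 1" unfolding a_def using z r by (simp add: powr_less_one)
    moreover have hx: "h x = (x - 1) * (r - r * a)" using z(3) h1 unfolding a_def by simp
    have "r * h x = r^2 * ((x - 1) * (1 - a))" unfolding hx
      by (simp add: algebra_simps power2_eq_square)
    ultimately have "r * h x > 0" using r2 True by simp
    then show ?thesis by (simp add: h_def)
  next
    case False
    hence xl: "x < 1" using x by simp
    obtain z where z: "x < z" "z < 1" "h 1 - h x = (1 - x) * (r - r * z powr (r - 1))"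
      using MVT2[OF xl, of h "\<lambda>y. r - r * y powr (r - 1)"] der x by force
    define a where "a = z powr (r - 1)"
    have "a > 1" unfolding a_def using powr_less_mono2_neg[of "r - 1" z 1] z r x by simp
    moreover have hx: "h x = - ((1 - x) * (r - r * a))" using z(3) h1 unfolding a_def by simp
    have "r * h x = r^2 * ((1 - x) * (a - 1))" unfolding hx
      by (simp add: algebra_simps power2_eq_square)
    ultimately have "r * h x > 0" using r2 xl by simp
    then show ?thesis by (simp add: h_def)
  qed
qed

lemma powr_midpoint_ne:
  fixes a b r :: real
  assumes ab: "0 < a" "0 < b" "a \<noteq> b" and r: "r \<noteq> 0" "r < 1"
  shows "(a powr r + b powr r) / 2 \<noteq> ((a + b) / 2) powr r"
proof
  define m where "m = (a + b) / 2"
  have m: "0 < m" "a / m \<noteq> 1" "b / m \<noteq> 1" using ab by (auto simp: m_def field_simps)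
  define x y where "x = a / m" and "y = b / m"
  have "r * (1 + r * (x - 1) - x powr r) > 0"
    using ab m r by (intro powr_tangent_strict) (auto simp: x_def)
  moreover have "r * (1 + r * (y - 1) - y powr r) > 0"
    using ab m r by (intro powr_tangent_strict) (auto simp: y_def)
  moreover have "x + y = 2"
    using ab by (simp add: x_def y_def add_divide_distrib[symmetric] m_def) (simp add: field_simps)
  moreover have "r * (1 + r * (x - 1) - x powr r) + r * (1 + r * (y - 1) - y powr r)
      = r * (2 - x powr r - y powr r) + r * r * (x + y - 2)"
    by (simp add: algebra_simps)
  ultimately have "r * (2 - x powr r - y powr r) > 0" by simp
  hence ne2: "x powr r + y powr r \<noteq> 2" by (metis diff_diff_eq diff_self mult_zero_right less_irrefl)
  assume "(a powr r + b powr r) / 2 = ((a + b) / 2) powr r"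
  hence "a powr r + b powr r = 2 * m powr r" by (simp add: m_def)
  hence "x powr r + y powr r = 2"
    using ab m(1) unfolding x_def y_def by (simp add: powr_divide add_divide_distrib[symmetric])
  with ne2 show False ..
qed


lemma cadjoint_cadjoint [simp]: "cadjoint (cadjoint A) = A"
  by (simp add: cadjoint_def vec_eq_iff)

lemma cadjoint_mult: "cadjoint (A ** B) = cadjoint B ** cadjoint A"
  by (simp add: cadjoint_def matrix_matrix_mult_def vec_eq_iff mult.commute)

lemma cadjoint_mat1 [simp]: "cadjoint (mat 1 :: complex^'n^'n) = mat 1"
  by (simp add: cadjoint_def mat_def vec_eq_iff)

lemma unitary_mat1: "unitary (mat 1 :: complex^'n^'n)"
  by (simp add: unitary_def)

lemma unitary_vec_cancel:
  assumes "unitary U"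
  shows "cadjoint U *v (U *v y) = y" and "U *v (cadjoint U *v y) = y"
  using assms by (simp_all add: unitary_def matrix_vector_mul_assoc)

definition diag_mat :: "('n \<Rightarrow> complex) \<Rightarrow> complex^'n^'n" where
  "diag_mat f = (\<chi> i j. if i = j then f i else 0)"

abbreviation rdiag :: "('n \<Rightarrow> real) \<Rightarrow> complex^'n^'n" where
  "rdiag d \<equiv> diag_mat (\<lambda>i. complex_of_real (d i))"

lemma diag_mat_mult_left: "(diag_mat f ** A) $ i $ j = f i * A $ i $ j"
proof -
  have "(diag_mat f ** A) $ i $ j = (\<Sum>k\<in>UNIV. if i = k then f i * A $ i $ j else 0)"
    unfolding diag_mat_def matrix_matrix_mult_def vec_lambda_beta by (rule sum.cong) auto
  then show ?thesis by simp
qed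

lemma diag_mat_mult_right: "(A ** diag_mat f) $ i $ j = A $ i $ j * f j"
proof -
  have "(A ** diag_mat f) $ i $ j = (\<Sum>k\<in>UNIV. if k = j then A $ i $ j * f j else 0)"
    unfolding diag_mat_def matrix_matrix_mult_def vec_lambda_beta by (rule sum.cong) auto
  then show ?thesis by simp
qed

lemma diag_mat_mult_vec: "(diag_mat f *v y) $ i = f i * y $ i"
proof -
  have "(diag_mat f *v y) $ i = (\<Sum>k\<in>UNIV. if i = k then f i * y $ i else 0)"
    unfolding diag_mat_def matrix_vector_mult_def vec_lambda_beta by (rule sum.cong) auto
  then show ?thesis by simp
qed

lemma cadjoint_rdiag: "cadjoint (rdiag d) = rdiag d"
  by (simp add: cadjoint_def diag_mat_def vec_eq_iff)

lemma inner_cadjoint: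
  "(\<Sum>i\<in>UNIV. cnj (x $ i) * (A *v z) $ i) = (\<Sum>k\<in>UNIV. cnj ((cadjoint A *v x) $ k) * z $ k)"
proof -
  have "(\<Sum>i\<in>UNIV. cnj (x $ i) * (A *v z) $ i) = (\<Sum>i\<in>UNIV. \<Sum>k\<in>UNIV. cnj (x $ i) * A $ i $ k * z $ k)"
    by (simp add: matrix_vector_mult_def sum_distrib_left mult.assoc)
  also have "\<dots> = (\<Sum>k\<in>UNIV. \<Sum>i\<in>UNIV. cnj (x $ i) * A $ i $ k * z $ k)" by (rule sum.swap)
  also have "\<dots> = (\<Sum>k\<in>UNIV. cnj ((cadjoint A *v x) $ k) * z $ k)"
    by (simp add: matrix_vector_mult_def cadjoint_def sum_distrib_right sum_distrib_left mult_ac)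
  finally show ?thesis .
qed

lemma qform_unitary_conj:
  "qform (U ** M ** cadjoint U) x = qform M (cadjoint U *v x)"
proof -
  have "(U ** M ** cadjoint U) *v x = U *v (M *v (cadjoint U *v x))"
    by (simp add: matrix_vector_mul_assoc matrix_mul_assoc)
  then show ?thesis unfolding qform_def using inner_cadjoint[of x U] by simp
qed

lemma qform_rdiag: "qform (rdiag d) y = complex_of_real (\<Sum>i\<in>UNIV. d i * (cmod (y $ i))^2)"
proof -
  have pointwise: "cnj z * (complex_of_real a * z) = complex_of_real (a * (cmod z)^2)" for z a
  proof -
    have "cnj z * (complex_of_real a * z) = complex_of_real a * (z * cnj z)" by (simp add: mult_ac)
    then show ?thesis by (simp add: complex_norm_square[symmetric])
  qed
  show ?thesis unfolding qform_def diag_mat_mult_vec pointwise by simp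
qed

lemma posdef_unitary_diag:
  fixes U :: "complex^'n^'n"
  assumes U: "unitary U" and d: "\<forall>i. 0 < d i"
  shows "posdef (U ** rdiag d ** cadjoint U)"
  unfolding posdef_def hermitian_def
proof safe
  show "cadjoint (U ** rdiag d ** cadjoint U) = U ** rdiag d ** cadjoint U"
    by (simp add: cadjoint_mult cadjoint_rdiag matrix_mul_assoc)
  fix x :: "complex^'n" assume x: "x \<noteq> 0"
  let ?y = "cadjoint U *v x"
  have "?y \<noteq> 0" using x unitary_vec_cancel(2)[OF U, of x] by auto
  then obtain k where k: "?y $ k \<noteq> 0" by (auto simp: vec_eq_iff)
  have q: "qform (U ** rdiag d ** cadjoint U) x = complex_of_real (\<Sum>i\<in>UNIV. d i * (cmod (?y $ i))^2)"
    by (simp add: qform_unitary_conj qform_rdiag)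
  show "qform (U ** rdiag d ** cadjoint U) x \<in> \<real>" by (simp add: q)
  have "0 < d k * (cmod (?y $ k))^2" using d k by simp
  also have "\<dots> \<le> (\<Sum>i\<in>UNIV. d i * (cmod (?y $ i))^2)"
    by (rule member_le_sum) (use d in \<open>auto intro!: mult_nonneg_nonneg simp: less_imp_le\<close>)
  finally show "0 < Re (qform (U ** rdiag d ** cadjoint U) x)" by (simp add: q)
qed

lemma psd_unitary_conj_imp:
  fixes U M :: "complex^'n^'n"
  assumes U: "unitary U" and psd: "psd (U ** M ** cadjoint U)"
  shows "psd M"
  unfolding psd_def hermitian_def
proof safe
  have UU: "cadjoint U ** U = mat 1" using U by (simp add: unitary_def)
  have M: "M = cadjoint U ** (U ** M ** cadjoint U) ** U"
    by (simp add: matrix_mul_assoc UU) (simp add: matrix_mul_assoc[symmetric] UU)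
  have "cadjoint (U ** M ** cadjoint U) = U ** M ** cadjoint U"
    using psd by (simp add: psd_def hermitian_def)
  then show "cadjoint M = M"
    by (subst (1 2) M) (simp add: cadjoint_mult matrix_mul_assoc)
next
  fix x
  have "qform M x = qform (U ** M ** cadjoint U) (U *v x)"
    by (simp add: qform_unitary_conj unitary_vec_cancel(1)[OF U])
  then show "qform M x \<in> \<real>" "0 \<le> Re (qform M x)"
    using psd by (simp_all add: psd_def)
qed


section \<open>Positive semidefinite matrices with a vanishing diagonal entry\<close>

lemma qform_two_coords:
  fixes M :: "complex^'n^'n"
  assumes pq: "p \<noteq> q"
  shows "qform M (\<chi> i. if i = p then a else if i = q then b else 0) =
    cnj a * (M $ p $ p * a + M $ p $ q * b) + cnj b * (M $ q $ p * a + M $ q $ q * b)"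
proof -
  let ?y = "(\<chi> i. if i = p then a else if i = q then b else 0) :: complex^'n"
  have mv: "(M *v ?y) $ i = M $ i $ p * a + M $ i $ q * b" for i
  proof -
    have "(M *v ?y) $ i = (\<Sum>j\<in>UNIV. (if j = p then M $ i $ p * a else 0) + (if j = q then M $ i $ q * b else 0))"
      unfolding matrix_vector_mult_def vec_lambda_beta by (rule sum.cong) (use pq in auto)
    then show ?thesis by (simp add: sum.distrib)
  qed
  have "qform M ?y = (\<Sum>i\<in>UNIV. (if i = p then cnj a * (M $ p $ p * a + M $ p $ q * b) else 0) +
      (if i = q then cnj b * (M $ q $ p * a + M $ q $ q * b) else 0))"
    unfolding qform_def mv by (rule sum.cong) (use pq in auto)
  then show ?thesis by (simp add: sum.distrib)
qed

text \<open>If a positive semidefinite matrix has a zero diagonal entry, the whole row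
  vanishes: otherwise the 2x2 principal submatrix [[0, w], [w*, c]] would have a
  negative quadratic form value.\<close>
lemma psd_zero_diag_row:
  fixes M :: "complex^'n^'n"
  assumes psd: "psd M" and pq: "p \<noteq> q" and Mpp: "M $ p $ p = 0"
  shows "M $ p $ q = 0"
proof (rule ccontr)
  define w where "w = M $ p $ q"
  assume "M $ p $ q \<noteq> 0"
  hence W: "(cmod w)^2 > 0" by (simp add: w_def)
  have "cadjoint M = M" using psd by (simp add: psd_def hermitian_def)
  hence "M $ q $ p = cadjoint M $ q $ p" by simp
  hence Mqp: "M $ q $ p = cnj w" by (simp add: cadjoint_def w_def)
  define c where "c = Re (M $ q $ q)"
  define s where "s = - (\<bar>c\<bar> + 1) / (2 * (cmod w)^2)"
  define y :: "complex^'n" where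
    "y = (\<chi> i. if i = p then complex_of_real s * w else if i = q then 1 else 0)"
  have wcw: "cnj w * w = complex_of_real ((cmod w)^2)"
    using complex_norm_square[of w] by (simp add: mult.commute)
  have "qform M y = cnj (complex_of_real s * w) * (M $ p $ p * (complex_of_real s * w) + M $ p $ q * 1)
      + cnj 1 * (M $ q $ p * (complex_of_real s * w) + M $ q $ q * 1)"
    unfolding y_def by (rule qform_two_coords[OF pq])
  also have "\<dots> = complex_of_real (2 * s * (cmod w)^2) + M $ q $ q"
    using wcw by (simp add: Mpp Mqp w_def[symmetric] algebra_simps)
  finally have "Re (qform M y) = 2 * s * (cmod w)^2 + c" by (simp add: c_def)
  also have "2 * s * (cmod w)^2 = - (\<bar>c\<bar> + 1)" using W by (simp add: s_def field_simps)
  finally have "Re (qform M y) < 0" by linarith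
  with psd show False by (simp add: psd_def not_le[symmetric])
qed

section \<open>Real powers of unitarily diagonalised matrices\<close>

text \<open>An intertwiner W with W D = E W only
  links eigenvalues d j = e i, and is therefore also an intertwiner of D^r and E^r.\<close>
lemma unitary_diag_powr_unique:
  fixes U V :: "complex^'n^'n"
  assumes U: "unitary U" and V: "unitary V" and d: "\<forall>i. 0 < d i" and e: "\<forall>i. 0 < e i"
    and eq: "U ** rdiag d ** cadjoint U = V ** rdiag e ** cadjoint V"
  shows "U ** rdiag (\<lambda>i. d i powr r) ** cadjoint U = V ** rdiag (\<lambda>i. e i powr r) ** cadjoint V"
proof -
  define W where "W = cadjoint V ** U"
  have UU: "cadjoint U ** U = mat 1" "U ** cadjoint U = mat 1" using U by (auto simp: unitary_def)
  have VV: "cadjoint V ** V = mat 1" "V ** cadjoint V = mat 1" using V by (auto simp: unitary_def)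
  have "cadjoint V ** (U ** rdiag d ** cadjoint U) ** U = cadjoint V ** (V ** rdiag e ** cadjoint V) ** U"
    using eq by simp
  hence "W ** rdiag d ** (cadjoint U ** U) = (cadjoint V ** V) ** rdiag e ** W"
    by (simp add: W_def matrix_mul_assoc)
  hence "W ** rdiag d = rdiag e ** W" by (simp add: UU VV)
  hence ent: "W $ i $ j * complex_of_real (d j) = complex_of_real (e i) * W $ i $ j" for i j
    by (metis diag_mat_mult_left diag_mat_mult_right)
  have "W $ i $ j * complex_of_real (d j powr r) = complex_of_real (e i powr r) * W $ i $ j" for i j
  proof (cases "W $ i $ j = 0")
    case False
    hence "d j = e i" using ent[of i j] by (simp add: mult.commute)
    then show ?thesis by (simp add: mult.commute)
  qed simp
  hence W_powr: "W ** rdiag (\<lambda>i. d i powr r) = rdiag (\<lambda>i. e i powr r) ** W"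
    by (simp add: vec_eq_iff diag_mat_mult_left diag_mat_mult_right)
  have "V ** rdiag (\<lambda>i. e i powr r) ** cadjoint V
      = V ** rdiag (\<lambda>i. e i powr r) ** (cadjoint V ** (U ** cadjoint U))"
    by (simp add: UU)
  also have "\<dots> = V ** (rdiag (\<lambda>i. e i powr r) ** W) ** cadjoint U"
    by (simp add: W_def matrix_mul_assoc)
  also have "\<dots> = V ** (W ** rdiag (\<lambda>i. d i powr r)) ** cadjoint U" by (simp add: W_powr)
  also have "\<dots> = (V ** cadjoint V) ** U ** rdiag (\<lambda>i. d i powr r) ** cadjoint U"
    by (simp add: W_def matrix_mul_assoc)
  finally show ?thesis by (simp add: VV)
qed

lemma mat_rpow_unitary_diag:
  fixes U :: "complex^'n^'n"
  assumes U: "unitary U" and d: "\<forall>i. 0 < d i"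
  shows "mat_rpow (U ** rdiag d ** cadjoint U) r = U ** rdiag (\<lambda>i. d i powr r) ** cadjoint U"
proof -
  define P where "P = (\<lambda>Z. \<exists>U' (d' :: 'n \<Rightarrow> real). unitary U' \<and> (\<forall>i. 0 < d' i) \<and>
      U ** rdiag d ** cadjoint U = U' ** rdiag d' ** cadjoint U' \<and>
      Z = U' ** rdiag (\<lambda>i. d' i powr r) ** cadjoint U')"
  have "P (U ** rdiag (\<lambda>i. d i powr r) ** cadjoint U)" unfolding P_def using U d by blast
  hence "P (SOME Z. P Z)" by (rule someI)
  then obtain U' d' where U': "unitary U'" "\<forall>i. 0 < d' i"
    "U ** rdiag d ** cadjoint U = U' ** rdiag d' ** cadjoint U'"
    "(SOME Z. P Z) = U' ** rdiag (\<lambda>i. d' i powr r) ** cadjoint U'" unfolding P_def by blast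
  have "mat_rpow (U ** rdiag d ** cadjoint U) r = (SOME Z. P Z)"
    unfolding mat_rpow_def P_def diag_mat_def by simp
  also have "\<dots> = U ** rdiag (\<lambda>i. d i powr r) ** cadjoint U"
    using unitary_diag_powr_unique[OF U U'(1) d U'(2) U'(3)] U'(4) by simp
  finally show ?thesis .
qed


section \<open>The convexity defect along a commuting segment\<close>

lemma matrix_add_rdistrib: "(A + B) ** C = A ** C + B ** C" for A B C :: "complex^'n^'n"
  by (vector matrix_matrix_mult_def sum.distrib[symmetric] field_simps)

lemma matrix_diff_ldistrib: "A ** (B - C) = A ** B - A ** C" for A B C :: "complex^'n^'n"
  by (vector matrix_matrix_mult_def sum_subtractf[symmetric] field_simps)

lemma matrix_diff_rdistrib: "(A - B) ** C = A ** C - B ** C" for A B C :: "complex^'n^'n"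
  by (vector matrix_matrix_mult_def sum_subtractf[symmetric] field_simps)

lemma sandwich_scaleR: "c *\<^sub>R (U ** A ** V) = U ** (c *\<^sub>R A) ** V"
  for U A V :: "complex^'n^'n"
  by (simp add: scalar_matrix_assoc matrix_scalar_ac)

lemma sandwich_add: "U ** A ** V + U ** B ** V = U ** (A + B) ** V"
  for U A B V :: "complex^'n^'n"
  by (simp add: matrix_add_ldistrib matrix_add_rdistrib)

lemma sandwich_diff: "U ** A ** V - U ** B ** V = U ** (A - B) ** V"
  for U A B V :: "complex^'n^'n"
  by (simp add: matrix_diff_ldistrib matrix_diff_rdistrib)

lemma convexity_defect_schur:
  fixes U Y :: "complex^'n^'n" and d1 d2 :: "'n \<Rightarrow> real" and t r :: real
  assumes U: "unitary U" and d1: "\<forall>i. 0 < d1 i" and d2: "\<forall>i. 0 < d2 i"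
    and t: "0 \<le> t" "t \<le> 1"
  defines "X1 \<equiv> U ** rdiag d1 ** cadjoint U" and "X2 \<equiv> U ** rdiag d2 ** cadjoint U"
    and "dm \<equiv> \<lambda>i. t * d1 i + (1 - t) * d2 i"
  defines "K \<equiv> \<lambda>i j. t * d1 i powr r * d1 j powr r + (1 - t) * d2 i powr r * d2 j powr r
      - dm i powr r * dm j powr r"
  shows "t *\<^sub>R (mat_rpow X1 r ** Y ** mat_rpow X1 r) + (1 - t) *\<^sub>R (mat_rpow X2 r ** Y ** mat_rpow X2 r)
      - mat_rpow (t *\<^sub>R X1 + (1 - t) *\<^sub>R X2) r ** Y ** mat_rpow (t *\<^sub>R X1 + (1 - t) *\<^sub>R X2) r
    = U ** (\<chi> i j. (cadjoint U ** Y ** U) $ i $ j * complex_of_real (K i j)) ** cadjoint U"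
proof -
  define Y' where "Y' = cadjoint U ** Y ** U"
  define F1 F2 Fm where "F1 = rdiag (\<lambda>i. d1 i powr r)" and "F2 = rdiag (\<lambda>i. d2 i powr r)"
    and "Fm = rdiag (\<lambda>i. dm i powr r)"
  have dm: "\<forall>i. 0 < dm i"
  proof
    fix i
    show "0 < dm i"
    proof (cases "t = 1")
      case False
      hence "0 < (1 - t) * d2 i" using t d2 by simp
      moreover have "0 \<le> t * d1 i" using t d1 by (simp add: less_imp_le)
      ultimately show ?thesis by (simp add: dm_def)
    qed (use d1 in \<open>simp add: dm_def\<close>)
  qed
  have "rdiag dm = t *\<^sub>R rdiag d1 + (1 - t) *\<^sub>R rdiag d2"
    by (simp add: vec_eq_iff diag_mat_def dm_def; simp add: scaleR_conv_of_real)
  hence mid: "t *\<^sub>R X1 + (1 - t) *\<^sub>R X2 = U ** rdiag dm ** cadjoint U"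
    unfolding X1_def X2_def by (simp add: sandwich_scaleR sandwich_add)
  have sandwich: "(U ** F ** cadjoint U) ** Y ** (U ** F ** cadjoint U) = U ** (F ** Y' ** F) ** cadjoint U"
    for F :: "complex^'n^'n"
    by (simp add: Y'_def matrix_mul_assoc)
  have "t *\<^sub>R (mat_rpow X1 r ** Y ** mat_rpow X1 r) + (1 - t) *\<^sub>R (mat_rpow X2 r ** Y ** mat_rpow X2 r)
      - mat_rpow (t *\<^sub>R X1 + (1 - t) *\<^sub>R X2) r ** Y ** mat_rpow (t *\<^sub>R X1 + (1 - t) *\<^sub>R X2) r
    = U ** (t *\<^sub>R (F1 ** Y' ** F1) + (1 - t) *\<^sub>R (F2 ** Y' ** F2) - Fm ** Y' ** Fm) ** cadjoint U"
    unfolding mid unfolding X1_def X2_def mat_rpow_unitary_diag[OF U d1] mat_rpow_unitary_diag[OF U d2]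
      mat_rpow_unitary_diag[OF U dm] F1_def[symmetric] F2_def[symmetric] Fm_def[symmetric] sandwich
    by (simp only: sandwich_scaleR sandwich_add sandwich_diff)
  also have "t *\<^sub>R (F1 ** Y' ** F1) + (1 - t) *\<^sub>R (F2 ** Y' ** F2) - Fm ** Y' ** Fm
      = (\<chi> i j. Y' $ i $ j * complex_of_real (K i j))"
    unfolding F1_def F2_def Fm_def K_def
    by (simp add: vec_eq_iff diag_mat_mult_left diag_mat_mult_right; simp add: scaleR_conv_of_real algebra_simps)
  finally show ?thesis by (simp add: Y'_def)
qed


section \<open>Non-scalar matrices have off-diagonal unitary conjugates\<close>

lemma sum_UNIV_two_support:
  fixes f :: "'n::finite \<Rightarrow> complex"
  assumes "p \<noteq> q" "\<And>k. k \<noteq> p \<Longrightarrow> k \<noteq> q \<Longrightarrow> f k = 0"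
  shows "sum f UNIV = f p + f q"
proof -
  have "sum f UNIV = sum f {p, q}" by (rule sum.mono_neutral_right) (use assms in auto)
  then show ?thesis using assms by simp
qed

lemma sum_UNIV_one_support:
  fixes f :: "'n::finite \<Rightarrow> complex"
  assumes "\<And>k. k \<noteq> p \<Longrightarrow> f k = 0"
  shows "sum f UNIV = f p"
proof -
  have "sum f UNIV = sum f {p}" by (rule sum.mono_neutral_right) (use assms in auto)
  then show ?thesis by simp
qed

definition plane_rotation :: "'n \<Rightarrow> 'n \<Rightarrow> complex^'n^'n" where
  "plane_rotation p q = (\<chi> i j. if (i = p \<or> i = q) \<and> (j = p \<or> j = q)
      then (if i = q \<and> j = q then - complex_of_real (1 / sqrt 2) else complex_of_real (1 / sqrt 2))
      else if i = j then 1 else 0)"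

lemma inv_sqrt2_square: "complex_of_real (1 / sqrt 2) * complex_of_real (1 / sqrt 2) = 1 / 2"
proof -
  have "(1 / sqrt 2) * (1 / sqrt 2) = (1 / 2 :: real)" by (simp add: field_simps)
  then show ?thesis by (metis of_real_mult of_real_divide of_real_1 of_real_numeral)
qed

lemma cadjoint_plane_rotation: "cadjoint (plane_rotation p q) = plane_rotation p q"
  by (auto simp: cadjoint_def plane_rotation_def vec_eq_iff)

lemma plane_rotation_involution:
  assumes pq: "p \<noteq> q"
  shows "plane_rotation p q ** plane_rotation p q = mat 1"
proof -
  let ?R = "plane_rotation p q"
  have "(?R ** ?R) $ i $ j = mat 1 $ i $ j" for i j
  proof (cases "i = p \<or> i = q")
    case True
    have "(?R ** ?R) $ i $ j = ?R $ i $ p * ?R $ p $ j + ?R $ i $ q * ?R $ q $ j"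
      unfolding matrix_matrix_mult_def vec_lambda_beta
      by (rule sum_UNIV_two_support[OF pq]) (use True in \<open>auto simp: plane_rotation_def\<close>)
    then show ?thesis using True pq inv_sqrt2_square by (auto simp: plane_rotation_def mat_def)
  next
    case False
    have "(?R ** ?R) $ i $ j = ?R $ i $ i * ?R $ i $ j"
      unfolding matrix_matrix_mult_def vec_lambda_beta
      by (rule sum_UNIV_one_support) (use False in \<open>auto simp: plane_rotation_def\<close>)
    then show ?thesis using False by (auto simp: plane_rotation_def mat_def)
  qed
  then show ?thesis by (simp add: vec_eq_iff)
qed

lemma unitary_plane_rotation: "p \<noteq> q \<Longrightarrow> unitary (plane_rotation p q)"
  by (simp add: unitary_def cadjoint_plane_rotation plane_rotation_involution)

lemma plane_rotation_conj_diagonal: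
  fixes Y :: "complex^'n^'n"
  assumes pq: "p \<noteq> q" and diag: "\<And>i j. i \<noteq> j \<Longrightarrow> Y $ i $ j = 0"
  shows "(cadjoint (plane_rotation p q) ** Y ** plane_rotation p q) $ p $ q = (Y $ p $ p - Y $ q $ q) / 2"
proof -
  let ?R = "plane_rotation p q" and ?s = "complex_of_real (1 / sqrt 2)"
  have mult_sub_pattern: "z * a * z + z * b * (- z) = (z * z) * (a - b)" for z a b :: complex
    by (simp add: algebra_simps)
  have row: "(?R ** Y) $ p $ l = ?R $ p $ l * Y $ l $ l" for l
    unfolding matrix_matrix_mult_def vec_lambda_beta by (rule sum_UNIV_one_support) (use diag in auto)
  have "(?R ** Y ** ?R) $ p $ q = (?R ** Y) $ p $ p * ?R $ p $ q + (?R ** Y) $ p $ q * ?R $ q $ q"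
    unfolding matrix_matrix_mult_def[of "?R ** Y"] vec_lambda_beta
    by (rule sum_UNIV_two_support[OF pq]) (auto simp: plane_rotation_def)
  also have "\<dots> = ?R $ p $ p * Y $ p $ p * ?R $ p $ q + ?R $ p $ q * Y $ q $ q * ?R $ q $ q"
    by (simp only: row)
  also have "\<dots> = ?s * Y $ p $ p * ?s + ?s * Y $ q $ q * (- ?s)"
    using pq by (simp add: plane_rotation_def)
  also have "\<dots> = (?s * ?s) * (Y $ p $ p - Y $ q $ q)"
    by (rule mult_sub_pattern)
  also have "\<dots> = (Y $ p $ p - Y $ q $ q) / 2" by (simp only: inv_sqrt2_square) simp
  finally show ?thesis by (simp add: cadjoint_plane_rotation)
qed

text \<open>Every non-scalar matrix has a unitary conjugate with a nonzero off-diagonal entry: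
  either Y itself has one, or Y is diagonal with two distinct diagonal entries.\<close>
lemma exists_unitary_offdiag:
  fixes Y :: "complex^'n^'n"
  assumes nonscalar: "\<And>c. Y \<noteq> mat c"
  obtains U p q where "unitary U" "p \<noteq> q" "(cadjoint U ** Y ** U) $ p $ q \<noteq> 0"
proof (cases "\<exists>p q. p \<noteq> q \<and> Y $ p $ q \<noteq> 0")
  case True
  then obtain p q where "p \<noteq> q" "Y $ p $ q \<noteq> 0" by blast
  then show ?thesis using that[of "mat 1" p q] unitary_mat1 by simp
next
  case False
  hence diag: "\<And>i j. i \<noteq> j \<Longrightarrow> Y $ i $ j = 0" by blast
  have "\<exists>p q. Y $ p $ p \<noteq> Y $ q $ q"
  proof (rule ccontr)
    assume "\<nexists>p q. Y $ p $ p \<noteq> Y $ q $ q"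
    hence "Y = mat (Y $ a $ a)" for a using diag by (auto simp: vec_eq_iff mat_def)
    with nonscalar show False by blast
  qed
  then obtain p q where "Y $ p $ p \<noteq> Y $ q $ q" by blast
  moreover from this have pq: "p \<noteq> q" by blast
  ultimately show ?thesis
    using that[of "plane_rotation p q" p q] unitary_plane_rotation[OF pq]
      plane_rotation_conj_diagonal[OF pq diag]
    by simp
qed

lemma rank_mat_complex: "rank (mat c :: complex^'n^'n) = (if c = 0 then 0 else CARD('n))"
proof (cases "c = 0")
  case True
  have "rows (0 :: complex^'n^'n) = {0}" by (auto simp: rows_def row_def vec_eq_iff)
  then show ?thesis using True by (simp add: row_rank_def_gen vec.dim_insert vec.span_zero)
next
  case False
  have "cart_basis \<subseteq> vec.span (rows (mat c :: complex^'n^'n))"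
  proof
    fix x :: "complex^'n" assume "x \<in> cart_basis"
    then obtain i where x: "x = axis i 1" by (auto simp: cart_basis_def)
    have "row i (mat c :: complex^'n^'n) \<in> rows (mat c)" by (auto simp: rows_def)
    moreover have "x = (1 / c) *s row i (mat c :: complex^'n^'n)"
      using False by (simp add: x vec_eq_iff row_def mat_def axis_def)
    ultimately show "x \<in> vec.span (rows (mat c :: complex^'n^'n))"
      by (simp add: vec.span_base vec.span_scale)
  qed
  hence "vec.span (rows (mat c :: complex^'n^'n)) = UNIV"
    by (metis span_cart_basis top.extremum_uniqueI vec.span_minimal vec.subspace_span)
  hence "vec.dim (rows (mat c :: complex^'n^'n)) = vec.dim (UNIV :: (complex^'n) set)"
    by (metis vec.dim_span)
  then show ?thesis using False by (simp add: row_rank_def_gen vec_dim_card card_cart_basis)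
qed

text \<open>If some unitary conjugate of Y has a nonzero off-diagonal entry at (p,q), then
  t = 1/2, X1 = U U* = I and X2 = U diag(1,..,3,..,1) U* (3 at position q) violate
  operator convexity: the kernel K of the convexity defect vanishes at (p,p) but
  not at (p,q), so the defect has a zero diagonal entry next to a nonzero one.\<close>
lemma not_convex_of_offdiag:
  fixes U Y :: "complex^'n^'n" and r :: real
  assumes r: "r < 0 \<or> (0 < r \<and> r < 1)" and U: "unitary U" and pq: "p \<noteq> q"
    and Ypq: "(cadjoint U ** Y ** U) $ p $ q \<noteq> 0"
  shows "\<exists>X1 X2 (t::real). posdef X1 \<and> posdef X2 \<and> 0 \<le> t \<and> t \<le> 1 \<and>
    \<not> loewner_le
        (mat_rpow (t *\<^sub>R X1 + (1 - t) *\<^sub>R X2) r ** Y **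
         mat_rpow (t *\<^sub>R X1 + (1 - t) *\<^sub>R X2) r)
        (t *\<^sub>R (mat_rpow X1 r ** Y ** mat_rpow X1 r) +
         (1 - t) *\<^sub>R (mat_rpow X2 r ** Y ** mat_rpow X2 r))"
proof -
  define d1 :: "'n \<Rightarrow> real" where "d1 = (\<lambda>i. 1)"
  define d2 :: "'n \<Rightarrow> real" where "d2 = (\<lambda>i. if i = q then 3 else 1)"
  define X1 where "X1 = U ** rdiag d1 ** cadjoint U"
  define X2 where "X2 = U ** rdiag d2 ** cadjoint U"
  define t :: real where "t = 1 / 2"
  define K where "K = (\<lambda>i j. t * d1 i powr r * d1 j powr r + (1 - t) * d2 i powr r * d2 j powr r
      - (t * d1 i + (1 - t) * d2 i) powr r * (t * d1 j + (1 - t) * d2 j) powr r)"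
  define M where "M = (\<chi> i j. (cadjoint U ** Y ** U) $ i $ j * complex_of_real (K i j))"
  have d1: "\<forall>i. 0 < d1 i" and d2: "\<forall>i. 0 < d2 i" by (auto simp: d1_def d2_def)
  have t: "0 \<le> t" "t \<le> 1" by (auto simp: t_def)
  have defect: "t *\<^sub>R (mat_rpow X1 r ** Y ** mat_rpow X1 r) + (1 - t) *\<^sub>R (mat_rpow X2 r ** Y ** mat_rpow X2 r)
      - mat_rpow (t *\<^sub>R X1 + (1 - t) *\<^sub>R X2) r ** Y ** mat_rpow (t *\<^sub>R X1 + (1 - t) *\<^sub>R X2) r
    = U ** M ** cadjoint U"
    unfolding X1_def X2_def M_def K_def by (rule convexity_defect_schur[OF U d1 d2 t])
  have "K p p = 0" using pq by (simp add: K_def d1_def d2_def)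
  hence Mpp: "M $ p $ p = 0" by (simp add: M_def)
  have "K p q = (1 powr r + 3 powr r) / 2 - ((1 + 3) / 2) powr r"
    using pq by (simp add: K_def d1_def d2_def t_def)
  moreover have "(1 powr r + 3 powr r) / 2 \<noteq> ((1 + 3) / 2) powr (r::real)"
    using r by (intro powr_midpoint_ne) auto
  ultimately have "K p q \<noteq> 0" by simp
  hence Mpq: "M $ p $ q \<noteq> 0" using Ypq by (simp add: M_def)
  have "\<not> psd M" using psd_zero_diag_row[OF _ pq Mpp] Mpq by blast
  hence "\<not> psd (U ** M ** cadjoint U)" using psd_unitary_conj_imp[OF U] by blast
  moreover have "posdef X1" "posdef X2"
    unfolding X1_def X2_def using posdef_unitary_diag[OF U] d1 d2 by auto
  ultimately show ?thesis
    using t unfolding loewner_le_def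
    by (intro exI[of _ X1] exI[of _ X2] exI[of _ t]) (simp only: defect, simp)
qed

text \<open>A rank-one matrix in dimension at least 2 is not scalar.\<close>
theorem lemma3p4:
  fixes r :: real and Y :: "complex^'n^'n"
  assumes "r < 0 \<or> (0 < r \<and> r < 1)"
    and "CARD('n) \<ge> 2"
    and "psd Y" and "rank Y = 1"
  shows "\<exists>X1 X2 (t::real). posdef X1 \<and> posdef X2 \<and> 0 \<le> t \<and> t \<le> 1 \<and>
    \<not> loewner_le
        (mat_rpow (t *\<^sub>R X1 + (1 - t) *\<^sub>R X2) r ** Y **
         mat_rpow (t *\<^sub>R X1 + (1 - t) *\<^sub>R X2) r)
        (t *\<^sub>R (mat_rpow X1 r ** Y ** mat_rpow X1 r) +
         (1 - t) *\<^sub>R (mat_rpow X2 r ** Y ** mat_rpow X2 r))"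
proof -
  have "Y \<noteq> mat c" for c
  proof
    assume "Y = mat c"
    moreover have "rank (mat c :: complex^'n^'n) = (if c = 0 then 0 else CARD('n))"
      by (rule rank_mat_complex)
    ultimately show False using assms(2,4) by (simp split: if_splits)
  qed
  then obtain U p q where "unitary U" "p \<noteq> q" "(cadjoint U ** Y ** U) $ p $ q \<noteq> 0"
    by (rule exists_unitary_offdiag)
  then show ?thesis by (rule not_convex_of_offdiag[OF assms(1)])
qed

end
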